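(* Let $c^1,\dots,c^n$ be a lattice basis of $\mathbb{Z}^n$, $K=\{x\in\mathbb{R}^n: c^ix\ge0,\ i=1,\dots,n\}$, and $\bar x\in K\cap\mathbb{Z}^n\setminus\{0\}$. Then $$Q(\bar x)=\Big\{x\in\mathbb{R}^n:\ c^ix\ge0\ (i=1,\dots,n),\ \ \sum_{i=1}^k d^k_i c^ix\ge\sum_{i=1}^k d^k_i c^i\bar x\ (k=1,\dots,n)\Big\}.$$
   Context: A lattice basis of $\mathbb{Z}^n$ is a set of $n$ linearly independent vectors $c^1,\dots,c^n\in\mathbb{Z}^n$ such that every $v\in\mathbb{Z}^n$ equals $\sum_i\lambda_ic^i$ with all $\lambda_i\in\mathbb{Z}$. Lexicographic order: $x\prec y$ iff $x\ne y$ and $c^ix<c^iy$ for the smallest index $i$ with $c^ix\ne c^iy$. $Q(\bar x):=\operatorname{conv}\{x\in K\cap\mathbb{Z}^n: x\succeq\bar x\}$. For $k\in\{1,\dots,n\}$, $i\in\{1,\dots,k\}$: $d^k_k=1$; $d^k_{k-1}=c^k\bar x$ (if $k\ge2$); $d^k_i=c^k\bar x\prod_{j=i+1}^{k-1}(c^j\bar x+1)$ for $i\le k-2$. The inequality $\sum_{i=1}^k d^k_ic^ix\ge\sum_{i=1}^k d^k_ic^i\bar x$ is the $k$-th lex-cut associated with $\bar x$. *)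

theory Defs
  imports "HOL-Analysis.Analysis"
begin

text \<open>Vectors of R^n are elements of real^'n, where the index type 'n is finite and
  linearly ordered (the order gives the numbering 1..n of coordinates and of basis vectors).\<close>

definition int_vec :: "real^'n \<Rightarrow> bool" where
  "int_vec v \<longleftrightarrow> (\<forall>j. v $ j \<in> \<int>)"

definition lattice_basis :: "('n::finite \<Rightarrow> real^'n) \<Rightarrow> bool" where
  "lattice_basis c \<longleftrightarrow>
     (\<forall>i. int_vec (c i)) \<and> inj c \<and> independent (range c) \<and>
     (\<forall>v. int_vec v \<longrightarrow> (\<exists>l. (\<forall>i. l i \<in> \<int>) \<and> v = (\<Sum>i\<in>UNIV. l i *\<^sub>R c i)))"

definition lex_less :: "(('n::{finite,linorder}) \<Rightarrow> real^('n::{finite,linorder})) \<Rightarrow> real^('n::{finite,linorder}) \<Rightarrow> real^('n::{finite,linorder}) \<Rightarrow> bool" where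
  "lex_less c x y \<longleftrightarrow> x \<noteq> y \<and>
     (\<exists>i. c i \<bullet> x \<noteq> c i \<bullet> y \<and> (\<forall>j<i. c j \<bullet> x = c j \<bullet> y) \<and> c i \<bullet> x < c i \<bullet> y)"

definition lex_le :: "(('n::{finite,linorder}) \<Rightarrow> real^('n::{finite,linorder})) \<Rightarrow> real^('n::{finite,linorder}) \<Rightarrow> real^('n::{finite,linorder}) \<Rightarrow> bool" where
  "lex_le c x y \<longleftrightarrow> x = y \<or> lex_less c x y"

definition Q :: "(('n::{finite,linorder}) \<Rightarrow> real^('n::{finite,linorder})) \<Rightarrow> (real^('n::{finite,linorder})) set \<Rightarrow> real^('n::{finite,linorder}) \<Rightarrow> (real^('n::{finite,linorder})) set" where
  "Q c K xbar = convex hull {x \<in> K. int_vec x \<and> lex_le c xbar x}"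

text \<open>Coefficients d^k_i (meaningful for i <= k): d^k_k = 1, and for i < k
  d^k_i = c^k xbar * prod_{i<j<k} (c^j xbar + 1); for i = k-1 the product is empty,
  giving d^k_{k-1} = c^k xbar.\<close>
definition lexd :: "(('n::{finite,linorder}) \<Rightarrow> real^('n::{finite,linorder})) \<Rightarrow> real^('n::{finite,linorder}) \<Rightarrow> 'n \<Rightarrow> 'n \<Rightarrow> real" where
  "lexd c xbar k i = (if i = k then 1
      else (c k \<bullet> xbar) * (\<Prod>j\<in>{i<..<k}. (c j \<bullet> xbar + 1)))"

end

(*
  Passing to the coordinates y_i = c^i x, which for a lattice basis is a linear bijection
  preserving integrality in both directions, K becomes the nonnegative orthant and the
  lexicographic order becomes the coordinatewise one; write y for the image of xbar.

  For i < k the cut coefficients telescope: d^k_i = sum_{i<j<=k} d^k_j y_j.  Hence every cut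
  is valid for an integer point z >= 0 that is lexicographically larger than y: at the first
  index i with z_i > y_i it gains at least d^k_i, and afterwards it loses at most
  sum_{i<j<=k} d^k_j y_j = d^k_i.

  Conversely let z satisfy the cuts, z <> y, with first difference at index m.  The m-th cut
  gives t = z_m - y_m > 0.  The integer point v = (y_1, ..., y_{m-1}, y_m + 1, 0, ..., 0) lies
  in the hull.  If t >= 1 then z - v >= 0, and the hull is closed under adding nonnegative
  vectors because the lexicographically larger integer points are closed under adding
  nonnegative integer vectors.  If t < 1 then z = t v + (1 - t) z', where z' agrees with y up
  to index m and again satisfies all cuts (by the telescoping identity), so z' lies in the
  hull by induction on the length of the common prefix of z and y.
*)
theory Submission
  imports Defs
begin

lemma prod_add_one_eq_sum:
  fixes a :: "'a::linorder \<Rightarrow> 'b::comm_ring_1"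
  assumes "finite A"
  shows "(\<Prod>j\<in>A. a j + 1) = 1 + (\<Sum>j\<in>A. a j * (\<Prod>l\<in>{l\<in>A. j < l}. a l + 1))"
  using assms
proof (induction A rule: finite_linorder_min_induct)
  case empty
  then show ?case by simp
next
  case (insert b A)
  have above_b: "{l\<in>insert b A. b < l} = A"
    using insert.hyps by auto
  have above_j: "{l\<in>insert b A. j < l} = {l\<in>A. j < l}" if "j \<in> A" for j
    using insert.hyps that by auto
  have "b \<notin> A"
    using insert.hyps by auto
  then have "(\<Prod>j\<in>insert b A. a j + 1) = a b * (\<Prod>j\<in>A. a j + 1) + (\<Prod>j\<in>A. a j + 1)"
    using insert.hyps by (simp add: algebra_simps)
  also have "\<dots> = 1 + (\<Sum>j\<in>insert b A. a j * (\<Prod>l\<in>{l\<in>insert b A. j < l}. a l + 1))"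
    using insert \<open>b \<notin> A\<close> above_b above_j by (simp add: algebra_simps)
  finally show ?case .
qed

lemma sum_atMost_split:
  fixes f :: "'a::{finite,linorder} \<Rightarrow> 'b::comm_monoid_add"
  assumes "i \<le> k"
  shows "(\<Sum>j\<in>{..k}. f j) = (\<Sum>j\<in>{..<i}. f j) + f i + (\<Sum>j\<in>{i<..k}. f j)"
proof -
  have "{..k} = {..<i} \<union> insert i {i<..k}" "{..<i} \<inter> insert i {i<..k} = {}"
    using assms by auto
  then show ?thesis
    by (simp add: sum.union_disjoint add_ac)
qed

definition cut_coeff :: "real^('n::{finite,linorder}) \<Rightarrow> 'n \<Rightarrow> 'n \<Rightarrow> real" where
  "cut_coeff y k i = (if i = k then 1 else y$k * (\<Prod>j\<in>{i<..<k}. y$j + 1))"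

lemma cut_coeff_nonneg: "(\<And>i. 0 \<le> y$i) \<Longrightarrow> 0 \<le> cut_coeff y k i"
  unfolding cut_coeff_def by (auto intro!: prod_nonneg mult_nonneg_nonneg)

lemma cut_coeff_telescope:
  assumes "i < k"
  shows "cut_coeff y k i = (\<Sum>j\<in>{i<..k}. cut_coeff y k j * y$j)"
proof -
  have middle: "(\<Sum>j\<in>{i<..<k}. cut_coeff y k j * y$j)
      = (\<Sum>j\<in>{i<..<k}. y$j * (\<Prod>l\<in>{l\<in>{i<..<k}. j < l}. y$l + 1)) * y$k"
    unfolding sum_distrib_right
  proof (rule sum.cong)
    fix j assume j: "j \<in> {i<..<k}"
    then have "{l\<in>{i<..<k}. j < l} = {j<..<k}"
      by auto
    then show "cut_coeff y k j * y$j = y$j * (\<Prod>l\<in>{l\<in>{i<..<k}. j < l}. y$l + 1) * y$k"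
      using j by (simp add: cut_coeff_def less_imp_neq)
  qed simp
  have "cut_coeff y k i = y$k * (\<Prod>j\<in>{i<..<k}. y$j + 1)"
    using assms by (simp add: cut_coeff_def)
  also have "\<dots> = y$k * (1 + (\<Sum>j\<in>{i<..<k}. y$j * (\<Prod>l\<in>{l\<in>{i<..<k}. j < l}. y$l + 1)))"
    using prod_add_one_eq_sum[of "{i<..<k}" "\<lambda>j. y$j"] by simp
  also have "\<dots> = (\<Sum>j\<in>insert k {i<..<k}. cut_coeff y k j * y$j)"
    using middle by (simp add: cut_coeff_def algebra_simps)
  also have "insert k {i<..<k} = {i<..k}"
    using assms by auto
  finally show ?thesis .
qed

lemma cut_coeff_tail_le:
  assumes "i \<le> k"
  shows "(\<Sum>j\<in>{i<..k}. cut_coeff y k j * y$j) \<le> cut_coeff y k i"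
  using assms cut_coeff_telescope[of i k y] by (cases "i = k") (auto simp: cut_coeff_def)

definition lex_le_vec :: "real^('n::{finite,linorder}) \<Rightarrow> real^('n::{finite,linorder}) \<Rightarrow> bool" where
  "lex_le_vec a b \<longleftrightarrow> a = b \<or> (\<exists>i. a$i < b$i \<and> (\<forall>j<i. a$j = b$j))"

definition lex_points :: "real^('n::{finite,linorder}) \<Rightarrow> (real^('n::{finite,linorder})) set" where
  "lex_points y = {z. (\<forall>i. 0 \<le> z$i) \<and> int_vec z \<and> lex_le_vec y z}"

definition cut_polyhedron :: "real^('n::{finite,linorder}) \<Rightarrow> (real^('n::{finite,linorder})) set" where
  "cut_polyhedron y = {z. (\<forall>i. 0 \<le> z$i) \<and>
     (\<forall>k. (\<Sum>i\<in>{..k}. cut_coeff y k i * y$i) \<le> (\<Sum>i\<in>{..k}. cut_coeff y k i * z$i))}"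

lemma lex_cut_valid:
  assumes y: "\<And>i. 0 \<le> y$i" "int_vec y" and z: "\<And>i. 0 \<le> z$i" "int_vec z"
    and less: "y$i < z$i" and agree: "\<forall>j<i. y$j = z$j"
  shows "(\<Sum>j\<in>{..k}. cut_coeff y k j * y$j) \<le> (\<Sum>j\<in>{..k}. cut_coeff y k j * z$j)"
proof -
  define f where "f j = cut_coeff y k j * (z$j - y$j)" for j
  have "0 \<le> (\<Sum>j\<in>{..k}. f j)"
  proof (cases "k < i")
    case True
    then show ?thesis
      using agree by (simp add: f_def)
  next
    case False
    then have "i \<le> k" by simp
    have "z$i - y$i \<in> \<int>"
      using y(2) z(2) by (simp add: int_vec_def Ints_diff)
    then have "1 \<le> z$i - y$i"
      using less Ints_nonzero_abs_ge1[of "z$i - y$i"] by simp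
    then have "cut_coeff y k i \<le> f i"
      unfolding f_def using mult_left_mono[OF _ cut_coeff_nonneg[OF y(1)]] by force
    moreover have "- cut_coeff y k i \<le> (\<Sum>j\<in>{i<..k}. f j)"
    proof -
      have "(\<Sum>j\<in>{i<..k}. - (cut_coeff y k j * y$j)) \<le> (\<Sum>j\<in>{i<..k}. f j)"
        unfolding f_def
        by (intro sum_mono) (simp add: algebra_simps cut_coeff_nonneg y(1) z(1))
      then show ?thesis
        using cut_coeff_tail_le[OF \<open>i \<le> k\<close>, of y] by (simp add: sum_negf)
    qed
    moreover have "(\<Sum>j\<in>{..<i}. f j) = 0"
      using agree by (simp add: f_def)
    ultimately show ?thesis
      using sum_atMost_split[OF \<open>i \<le> k\<close>, of f] by linarith
  qed
  then show ?thesis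
    by (simp add: f_def sum_subtractf algebra_simps)
qed

lemma lex_points_subset_cut_polyhedron:
  assumes "\<And>i. 0 \<le> y$i" "int_vec y"
  shows "lex_points y \<subseteq> cut_polyhedron y"
  using lex_cut_valid[OF assms] by (fastforce simp: lex_points_def cut_polyhedron_def lex_le_vec_def)

lemma convex_cut_polyhedron: "convex (cut_polyhedron y)"
proof -
  have linear_sum: "linear (\<lambda>z::real^'n. \<Sum>i\<in>I. a i * z$i)" for a I
    by (rule linearI) (simp_all add: sum.distrib sum_distrib_left algebra_simps)
  have "cut_polyhedron y = (\<Inter>i. (\<lambda>z. z$i) -` {0..}) \<inter>
      (\<Inter>k. (\<lambda>z. \<Sum>i\<in>{..k}. cut_coeff y k i * z$i) -` {(\<Sum>i\<in>{..k}. cut_coeff y k i * y$i)..})"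
    unfolding cut_polyhedron_def by auto
  also have "convex \<dots>"
    using linear_sum[of "\<lambda>j. if j = i then 1 else 0" "{i}" for i]
    by (intro convex_Int convex_INT convex_linear_vimage linear_sum convex_real_interval) simp_all
  finally show ?thesis .
qed

lemma first_difference:
  fixes y z :: "real^('n::{finite,linorder})"
  assumes "z \<noteq> y"
  obtains m where "z$m \<noteq> y$m" "\<forall>j<m. z$j = y$j"
proof -
  define m where "m = Min {j. z$j \<noteq> y$j}"
  have "{j. z$j \<noteq> y$j} \<noteq> {}"
    using assms by (auto simp: vec_eq_iff)
  then have "z$m \<noteq> y$m"
    using Min_in[of "{j. z$j \<noteq> y$j}"] by (simp add: m_def)
  moreover have "z$j = y$j" if "j < m" for j
  proof (rule ccontr)
    assume "z$j \<noteq> y$j"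
    then have "m \<le> j"
      unfolding m_def by (simp add: Min_le)
    then show False
      using that by simp
  qed
  ultimately show thesis
    using that by blast
qed

lemma lex_le_vec_mono:
  assumes "lex_le_vec y z" and le: "\<And>i. z$i \<le> w$i"
  shows "lex_le_vec y w"
proof (cases "w = y")
  case False
  then obtain m where m: "w$m \<noteq> y$m" "\<forall>j<m. w$j = y$j"
    by (rule first_difference)
  have "y$m < w$m"
  proof (cases "z = y")
    case True
    then show ?thesis using m le[of m] by auto
  next
    case False
    then obtain i where i: "y$i < z$i" "\<forall>j<i. y$j = z$j"
      using \<open>lex_le_vec y z\<close> by (auto simp: lex_le_vec_def)
    have "\<not> i < m"
      using i m le[of i] by auto
    then show ?thesis
      using i m le[of m] by (cases "m = i") auto
  qed
  then show ?thesis
    using m by (auto simp: lex_le_vec_def)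
qed (simp add: lex_le_vec_def)

lemma lex_points_add:
  assumes "z \<in> lex_points y" and w: "\<And>i. 0 \<le> w$i" "int_vec w"
  shows "z + w \<in> lex_points y"
proof -
  have z: "\<forall>i. 0 \<le> z$i" "int_vec z" "lex_le_vec y z"
    using assms(1) unfolding lex_points_def by auto
  have "lex_le_vec y (z + w)"
    by (rule lex_le_vec_mono[OF z(3)]) (simp add: w(1))
  moreover have "int_vec (z + w)"
    using z(2) w(2) unfolding int_vec_def by (simp add: Ints_add)
  ultimately show ?thesis
    unfolding lex_points_def using z(1) w(1) by (simp add: add_nonneg_nonneg)
qed

lemma hull_lex_points_add_axis:
  assumes u: "u \<in> convex hull (lex_points y)" and "0 \<le> s"
  shows "u + s *\<^sub>R axis j 1 \<in> convex hull (lex_points y)"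
proof -
  define M :: nat where "M = nat \<lceil>s\<rceil> + 1"
  have M: "0 < real M" "s \<le> real M"
    unfolding M_def by linarith+
  define a where "a = real M *\<^sub>R axis j (1::real)"
  have "\<And>i. 0 \<le> a$i" "int_vec a"
    by (auto simp: a_def axis_def int_vec_def)
  then have "(\<lambda>x. a + x) ` lex_points y \<subseteq> lex_points y"
    using lex_points_add[of _ y a] by (auto simp: add.commute)
  then have "convex hull ((\<lambda>x. a + x) ` lex_points y) \<subseteq> convex hull (lex_points y)"
    by (rule hull_mono)
  moreover have "a + u \<in> convex hull ((\<lambda>x. a + x) ` lex_points y)"
    unfolding convex_hull_translation using u by blast
  ultimately have au: "a + u \<in> convex hull (lex_points y)"
    by blast
  have "(1 - s / real M) *\<^sub>R u + (s / real M) *\<^sub>R (a + u) \<in> convex hull (lex_points y)"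
    by (rule convexD[OF convex_convex_hull u au]) (use M \<open>0 \<le> s\<close> in \<open>auto simp: field_simps\<close>)
  also have "(1 - s / real M) *\<^sub>R u + (s / real M) *\<^sub>R (a + u) = u + s *\<^sub>R axis j 1"
    unfolding a_def using M by (simp add: algebra_simps)
  finally show ?thesis .
qed

lemma hull_lex_points_add_nonneg:
  assumes u: "u \<in> convex hull (lex_points y)" and r: "\<And>i. 0 \<le> r$i"
  shows "u + r \<in> convex hull (lex_points y)"
proof -
  have "u + (\<Sum>j\<in>F. r$j *\<^sub>R axis j 1) \<in> convex hull (lex_points y)" if "finite F" for F
    using that
  proof (induction F rule: finite_induct)
    case (insert j F)
    have "u + (\<Sum>j\<in>F. r$j *\<^sub>R axis j 1) + r$j *\<^sub>R axis j 1 \<in> convex hull (lex_points y)"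
      by (rule hull_lex_points_add_axis[OF insert.IH r])
    then show ?case
      using insert.hyps by (simp add: algebra_simps)
  qed (simp add: u)
  from this[of UNIV] show ?thesis
    using basis_expansion[of r] by (simp add: scalar_mult_eq_scaleR)
qed

lemma cut_polyhedron_first_difference_le:
  assumes "z \<in> cut_polyhedron y" and agree: "\<forall>j<m. z$j = y$j"
  shows "y$m \<le> z$m"
proof -
  have "(\<Sum>j\<in>{..m}. cut_coeff y m j * y$j) \<le> (\<Sum>j\<in>{..m}. cut_coeff y m j * z$j)"
    using assms(1) by (simp add: cut_polyhedron_def)
  moreover have "(\<Sum>j\<in>{..<m}. cut_coeff y m j * z$j) = (\<Sum>j\<in>{..<m}. cut_coeff y m j * y$j)"
    using agree by simp
  ultimately show ?thesis
    using sum_atMost_split[of m m "\<lambda>j. cut_coeff y m j * y$j"]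
      sum_atMost_split[of m m "\<lambda>j. cut_coeff y m j * z$j"]
    by (simp add: cut_coeff_def)
qed

lemma cut_polyhedron_rescale_tail:
  assumes y: "\<And>i. 0 \<le> y$i" and z: "z \<in> cut_polyhedron y" and agree: "\<forall>j<m. z$j = y$j"
    and t: "z$m = y$m + t" "t < 1"
  shows "(\<chi> j. if j \<le> m then y$j else z$j / (1 - t)) \<in> cut_polyhedron y"
    (is "?z' \<in> _")
proof -
  have z_cut: "(\<Sum>j\<in>{..k}. cut_coeff y k j * y$j) \<le> (\<Sum>j\<in>{..k}. cut_coeff y k j * z$j)" for k
    using z by (simp add: cut_polyhedron_def)
  have "(\<Sum>j\<in>{..k}. cut_coeff y k j * y$j) \<le> (\<Sum>j\<in>{..k}. cut_coeff y k j * ?z'$j)" for k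
  proof (cases "k \<le> m")
    case True
    then have "(\<Sum>j\<in>{..k}. cut_coeff y k j * ?z'$j) = (\<Sum>j\<in>{..k}. cut_coeff y k j * y$j)"
      by (intro sum.cong) auto
    then show ?thesis
      by simp
  next
    case False
    then have "m < k" by simp
    have head: "(\<Sum>j\<in>{..<m}. cut_coeff y k j * z$j) = (\<Sum>j\<in>{..<m}. cut_coeff y k j * y$j)"
      "(\<Sum>j\<in>{..<m}. cut_coeff y k j * ?z'$j) = (\<Sum>j\<in>{..<m}. cut_coeff y k j * y$j)"
      using agree by (auto intro!: sum.cong)
    have tail: "(\<Sum>j\<in>{m<..k}. cut_coeff y k j * ?z'$j) = (\<Sum>j\<in>{m<..k}. cut_coeff y k j * z$j) / (1 - t)"
      unfolding sum_divide_distrib by (intro sum.cong) auto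
    have "(\<Sum>j\<in>{m<..k}. cut_coeff y k j * y$j) - t * cut_coeff y k m
        \<le> (\<Sum>j\<in>{m<..k}. cut_coeff y k j * z$j)"
      using z_cut[of k] head t(1) \<open>m < k\<close>
        sum_atMost_split[of m k "\<lambda>j. cut_coeff y k j * y$j"]
        sum_atMost_split[of m k "\<lambda>j. cut_coeff y k j * z$j"]
      by (simp add: algebra_simps)
    then have "(1 - t) * cut_coeff y k m \<le> (\<Sum>j\<in>{m<..k}. cut_coeff y k j * z$j)"
      using cut_coeff_telescope[OF \<open>m < k\<close>] by (simp add: algebra_simps)
    then have "(\<Sum>j\<in>{m<..k}. cut_coeff y k j * y$j) \<le> (\<Sum>j\<in>{m<..k}. cut_coeff y k j * ?z'$j)"
      unfolding tail cut_coeff_telescope[OF \<open>m < k\<close>, symmetric] using t(2)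
      by (simp add: field_simps)
    then show ?thesis
      using head \<open>m < k\<close> sum_atMost_split[of m k "\<lambda>j. cut_coeff y k j * y$j"]
        sum_atMost_split[of m k "\<lambda>j. cut_coeff y k j * ?z'$j"]
      by simp
  qed
  moreover have "0 \<le> ?z'$i" for i
    using y z t(2) by (simp add: cut_polyhedron_def)
  ultimately show ?thesis
    by (simp add: cut_polyhedron_def)
qed

definition lex_step :: "real^('n::{finite,linorder}) \<Rightarrow> 'n \<Rightarrow> real^('n::{finite,linorder})" where
  "lex_step y m = (\<chi> j. if j < m then y$j else if j = m then y$m + 1 else 0)"

lemma lex_step_in_lex_points:
  assumes "\<And>i. 0 \<le> y$i" "int_vec y"
  shows "lex_step y m \<in> lex_points y"
  using assms unfolding lex_points_def lex_le_vec_def int_vec_def lex_step_def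
  by (auto intro!: exI[of _ m])

lemma lex_step_le:
  assumes "\<And>i. 0 \<le> z$i" "\<forall>j<m. z$j = y$j" "y$m + 1 \<le> z$m"
  shows "lex_step y m $ i \<le> z$i"
  using assms by (cases "i < m"; cases "i = m") (auto simp: lex_step_def)

lemma lex_step_convex_combination:
  assumes agree: "\<forall>j<m. z$j = y$j" and t: "z$m = y$m + t" "t < 1"
  shows "t *\<^sub>R lex_step y m + (1 - t) *\<^sub>R (\<chi> j. if j \<le> m then y$j else z$j / (1 - t)) = z"
proof (subst vec_eq_iff, intro allI)
  fix i
  consider "i < m" | "i = m" | "m < i"
    using less_linear by blast
  then show "(t *\<^sub>R lex_step y m + (1 - t) *\<^sub>R (\<chi> j. if j \<le> m then y$j else z$j / (1 - t)))$i = z$i"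
  proof cases
    case 1
    then have "i \<le> m" "i \<noteq> m"
      by simp_all
    then show ?thesis
      using 1 agree by (simp add: lex_step_def algebra_simps)
  next
    case 2
    then show ?thesis
      using t(1) by (simp add: lex_step_def algebra_simps)
  next
    case 3
    then have "\<not> i \<le> m" "\<not> i < m" "i \<noteq> m"
      by simp_all
    then show ?thesis
      using t(2) by (simp add: lex_step_def)
  qed
qed

lemma differences_upto_psubset:
  fixes y z z' :: "real^('n::{finite,linorder})"
  assumes "z$m \<noteq> y$m" "\<forall>j\<le>m. z'$j = y$j"
  shows "{i. \<exists>j\<le>i. z'$j \<noteq> y$j} \<subset> {i. \<exists>j\<le>i. z$j \<noteq> y$j}"
proof
  show "{i. \<exists>j\<le>i. z'$j \<noteq> y$j} \<subseteq> {i. \<exists>j\<le>i. z$j \<noteq> y$j}"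
  proof
    fix i assume "i \<in> {i. \<exists>j\<le>i. z'$j \<noteq> y$j}"
    then obtain j where "j \<le> i" "z'$j \<noteq> y$j"
      by blast
    then have "m \<le> i"
      using assms(2) by (cases "j \<le> m") auto
    then show "i \<in> {i. \<exists>j\<le>i. z$j \<noteq> y$j}"
      using assms(1) by blast
  qed
  show "{i. \<exists>j\<le>i. z'$j \<noteq> y$j} \<noteq> {i. \<exists>j\<le>i. z$j \<noteq> y$j}"
    using assms by force
qed

lemma cut_polyhedron_subset_hull:
  assumes y: "\<And>i. 0 \<le> y$i" "int_vec y"
  shows "cut_polyhedron y \<subseteq> convex hull (lex_points y)"
proof
  fix z assume "z \<in> cut_polyhedron y"
  then show "z \<in> convex hull (lex_points y)"
  proof (induction "card {i. \<exists>j\<le>i. z$j \<noteq> y$j}" arbitrary: z rule: less_induct)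
    case less
    then have z0: "\<And>i. 0 \<le> z$i"
      by (simp add: cut_polyhedron_def)
    have step: "lex_step y m \<in> convex hull (lex_points y)" for m
      using lex_step_in_lex_points[OF y] by (simp add: hull_inc)
    show ?case
    proof (cases "z = y")
      case True
      then show ?thesis
        using y by (simp add: hull_inc lex_points_def lex_le_vec_def)
    next
      case False
      then obtain m where m: "z$m \<noteq> y$m" "\<forall>j<m. z$j = y$j"
        by (rule first_difference)
      define t where "t = z$m - y$m"
      have "0 < t"
        using cut_polyhedron_first_difference_le[OF less.prems m(2)] m(1) by (simp add: t_def)
      consider (large) "1 \<le> t" | (small) "t < 1"
        by linarith
      then show ?thesis
      proof cases
        case large
        then have "0 \<le> (z - lex_step y m)$i" for i
          using lex_step_le[OF z0 m(2)] by (simp add: t_def)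
        from hull_lex_points_add_nonneg[OF step[of m] this] show ?thesis
          by simp
      next
        case small
        define z' where "z' = (\<chi> j. if j \<le> m then y$j else z$j / (1 - t))"
        have "z' \<in> cut_polyhedron y"
          unfolding z'_def using small m(2)
          by (intro cut_polyhedron_rescale_tail[OF y(1) less.prems]) (auto simp: t_def)
        moreover have "{i. \<exists>j\<le>i. z'$j \<noteq> y$j} \<subset> {i. \<exists>j\<le>i. z$j \<noteq> y$j}"
          using m(1) by (intro differences_upto_psubset) (auto simp: z'_def)
        ultimately have "z' \<in> convex hull (lex_points y)"
          using less.hyps psubset_card_mono[OF finite] by blast
        then have "t *\<^sub>R lex_step y m + (1 - t) *\<^sub>R z' \<in> convex hull (lex_points y)"
          using step \<open>0 < t\<close> small by (intro convexD[OF convex_convex_hull]) auto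
        then show ?thesis
          using lex_step_convex_combination[OF m(2) _ small] by (simp add: z'_def t_def)
      qed
    qed
  qed
qed

lemma hull_lex_points_eq:
  assumes "\<And>i. 0 \<le> y$i" "int_vec y"
  shows "convex hull (lex_points y) = cut_polyhedron y"
  using assms cut_polyhedron_subset_hull lex_points_subset_cut_polyhedron
  by (metis convex_cut_polyhedron hull_minimal subset_antisym)

definition coords :: "('n::finite \<Rightarrow> real^'n) \<Rightarrow> real^'n \<Rightarrow> real^'n" where
  "coords c x = (\<chi> i. c i \<bullet> x)"

lemma coords_nth [simp]: "coords c x $ i = c i \<bullet> x"
  by (simp add: coords_def)

lemma linear_coords: "linear (coords c)"
  by (rule linearI) (simp_all add: vec_eq_iff inner_add_right)

lemma int_vec_coords:
  assumes "\<And>i. int_vec (c i)" "int_vec x"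
  shows "int_vec (coords c x)"
  using assms unfolding int_vec_def by (auto simp: inner_vec_def intro!: Ints_sum Ints_mult)

lemma lattice_basis_component:
  assumes "lattice_basis c"
  obtains l where "\<And>i. l i \<in> \<int>" "\<And>x. x$j = (\<Sum>i\<in>UNIV. l i * (c i \<bullet> x))"
proof -
  have "int_vec (axis j (1::real))"
    by (simp add: int_vec_def axis_def)
  then obtain l where l: "\<forall>i. l i \<in> \<int>" "axis j 1 = (\<Sum>i\<in>UNIV. l i *\<^sub>R c i)"
    using assms unfolding lattice_basis_def by blast
  have "x$j = (\<Sum>i\<in>UNIV. l i * (c i \<bullet> x))" for x
  proof -
    have "x$j = axis j 1 \<bullet> x"
      by (simp add: inner_axis')
    then show ?thesis
      unfolding l(2) by (simp add: inner_sum_left)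
  qed
  then show thesis
    using l(1) that by blast
qed

lemma inj_coords:
  assumes "lattice_basis c"
  shows "inj (coords c)"
proof (rule injI)
  fix x y assume eq: "coords c x = coords c y"
  show "x = y"
  proof (subst vec_eq_iff, intro allI)
    fix j
    obtain l where "\<And>x. x$j = (\<Sum>i\<in>UNIV. l i * (c i \<bullet> x))"
      using lattice_basis_component[OF assms] by blast
    then show "x$j = y$j"
      using eq by (simp add: vec_eq_iff)
  qed
qed

lemma int_vec_coords_iff:
  assumes "lattice_basis c"
  shows "int_vec (coords c x) \<longleftrightarrow> int_vec x"
proof
  assume int: "int_vec (coords c x)"
  show "int_vec x"
    unfolding int_vec_def
  proof
    fix j
    obtain l where "\<And>i. l i \<in> \<int>" "\<And>x. x$j = (\<Sum>i\<in>UNIV. l i * (c i \<bullet> x))"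
      using lattice_basis_component[OF assms] by blast
    then show "x$j \<in> \<int>"
      using int unfolding int_vec_def by (auto intro!: Ints_sum Ints_mult)
  qed
next
  show "int_vec x \<Longrightarrow> int_vec (coords c x)"
    using assms by (intro int_vec_coords) (auto simp: lattice_basis_def)
qed

lemma lex_le_iff_coords:
  assumes "lattice_basis c"
  shows "lex_le c a b \<longleftrightarrow> lex_le_vec (coords c a) (coords c b)"
proof -
  have "a = b \<longleftrightarrow> coords c a = coords c b"
    using inj_coords[OF assms] by (auto dest: injD)
  then show ?thesis
    unfolding lex_le_def lex_less_def lex_le_vec_def by (auto 0 4 dest: less_imp_neq)
qed

lemma coords_image_lex_points:
  assumes "lattice_basis c"
  shows "coords c ` {x. (\<forall>i. 0 \<le> c i \<bullet> x) \<and> int_vec x \<and> lex_le c xbar x}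
    = lex_points (coords c xbar)"
proof -
  have "surj (coords c)"
    using linear_inj_imp_surj[OF linear_coords inj_coords[OF assms]] .
  then have "lex_points (coords c xbar) = coords c ` (coords c -` lex_points (coords c xbar))"
    by (simp add: surj_image_vimage_eq)
  also have "coords c -` lex_points (coords c xbar) = {x. (\<forall>i. 0 \<le> c i \<bullet> x) \<and> int_vec x \<and> lex_le c xbar x}"
    using assms by (auto simp: lex_points_def int_vec_coords_iff lex_le_iff_coords)
  finally show ?thesis ..
qed

theorem proposition1:
  fixes c :: "'n::{finite,linorder} \<Rightarrow> real^('n::{finite,linorder})" and K :: "(real^('n::{finite,linorder})) set" and xbar :: "real^('n::{finite,linorder})"
  assumes "lattice_basis c"
    and "K = {x. \<forall>i. c i \<bullet> x \<ge> 0}"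
    and "xbar \<in> K" and "int_vec xbar" and "xbar \<noteq> 0"
  shows "Q c K xbar =
    {x. (\<forall>i. c i \<bullet> x \<ge> 0) \<and>
        (\<forall>k. (\<Sum>i\<in>{..k}. lexd c xbar k i * (c i \<bullet> x))
              \<ge> (\<Sum>i\<in>{..k}. lexd c xbar k i * (c i \<bullet> xbar)))}"
proof -
  let ?y = "coords c xbar"
  have y: "\<And>i. 0 \<le> ?y$i" "int_vec ?y"
    using assms(1-4) by (simp_all add: int_vec_coords_iff)
  have "coords c ` Q c K xbar = cut_polyhedron ?y"
    unfolding Q_def convex_hull_linear_image[OF linear_coords] assms(2)
    using hull_lex_points_eq[OF y] coords_image_lex_points[OF assms(1)] by simp
  then have "Q c K xbar = coords c -` cut_polyhedron ?y"
    using inj_vimage_image_eq[OF inj_coords[OF assms(1)]] by metis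
  moreover have "lexd c xbar = cut_coeff ?y"
    by (intro ext) (simp add: lexd_def cut_coeff_def)
  ultimately show ?thesis
    by (simp add: cut_polyhedron_def)
qed

end
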